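(* Let $2\le r<m\le n$ and $k\ge1$. Then $\mathcal Z^{m,n}_{r,k}$ has at least $1+\lfloor k/2\rfloor$ irreducible components.
   Context: Let $F$ be an algebraically closed field. For integers $1\le r\le m\le n$ and $k\ge 1$, let $S=F[x^{(l)}_{i,j}:1\le i\le m,\ 1\le j\le n,\ 0\le l\le k-1]$, the coordinate ring of $\mathbf A^{mnk}_F$, and let $X(t)$ be the $m\times n$ matrix over $S[t]/(t^k)$ with $(i,j)$ entry $x_{i,j}(t)=\sum_{l=0}^{k-1}x^{(l)}_{i,j}t^l$. $\mathcal I^{m,n}_{r,k}\subseteq S$ is the ideal generated by the coefficients of $t^l$, $0\le l\le k-1$, of all $r\times r$ minors of $X(t)$, and $\mathcal Z^{m,n}_{r,k}\subseteq\mathbf A^{mnk}_F$ is its zero set. *)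

theory Defs
  imports "HOL-Computational_Algebra.Polynomial" "Jordan_Normal_Form.Determinant"
begin

definition alg_closed :: "'a::field itself \<Rightarrow> bool" where
  "alg_closed _ \<longleftrightarrow> (\<forall>p::'a poly. degree p > 0 \<longrightarrow> (\<exists>x. poly p x = 0))"

text \<open>Polynomial functions on the affine space with coordinates indexed by the set V.
  Over an infinite field these are exactly the polynomials in the variables V.\<close>
inductive_set polyfun :: "'v set \<Rightarrow> (('v \<Rightarrow> 'a::comm_ring_1) \<Rightarrow> 'a) set" for V where
  pf_const: "(\<lambda>x. c) \<in> polyfun V"
| pf_var: "v \<in> V \<Longrightarrow> (\<lambda>x. x v) \<in> polyfun V"
| pf_add: "p \<in> polyfun V \<Longrightarrow> q \<in> polyfun V \<Longrightarrow> (\<lambda>x. p x + q x) \<in> polyfun V"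
| pf_mult: "p \<in> polyfun V \<Longrightarrow> q \<in> polyfun V \<Longrightarrow> (\<lambda>x. p x * q x) \<in> polyfun V"

definition affine_space :: "'v set \<Rightarrow> ('v \<Rightarrow> 'a::zero) set" where
  "affine_space V = {x. \<forall>v. v \<notin> V \<longrightarrow> x v = 0}"

definition zariski_closed :: "'v set \<Rightarrow> ('v \<Rightarrow> 'a::comm_ring_1) set \<Rightarrow> bool" where
  "zariski_closed V S \<longleftrightarrow>
     (\<exists>P \<subseteq> polyfun V. S = {x \<in> affine_space V. \<forall>p\<in>P. p x = 0})"

definition zariski_irreducible :: "'v set \<Rightarrow> ('v \<Rightarrow> 'a::comm_ring_1) set \<Rightarrow> bool" where
  "zariski_irreducible V S \<longleftrightarrow> zariski_closed V S \<and> S \<noteq> {} \<and>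
     (\<forall>A B. zariski_closed V A \<and> zariski_closed V B \<and> S = A \<union> B \<longrightarrow> S = A \<or> S = B)"

definition irreducible_components ::
  "'v set \<Rightarrow> ('v \<Rightarrow> 'a::comm_ring_1) set \<Rightarrow> ('v \<Rightarrow> 'a) set set" where
  "irreducible_components V Z =
     {C. C \<subseteq> Z \<and> zariski_irreducible V C \<and>
         (\<forall>D. D \<subseteq> Z \<and> zariski_irreducible V D \<and> C \<subseteq> D \<longrightarrow> D = C)}"

text \<open>Variables x^{(l)}_{i,j} indexed by (i,j,l) with 0 \<le> i < m, 0 \<le> j < n, 0 \<le> l < k
  (0-based indices).\<close>
definition jet_vars :: "nat \<Rightarrow> nat \<Rightarrow> nat \<Rightarrow> (nat \<times> nat \<times> nat) set" where
  "jet_vars m n k = {0..<m} \<times> {0..<n} \<times> {0..<k}"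

definition jet_entry :: "nat \<Rightarrow> (nat \<times> nat \<times> nat \<Rightarrow> 'a::comm_ring_1) \<Rightarrow> nat \<Rightarrow> nat \<Rightarrow> 'a poly" where
  "jet_entry k x i j = (\<Sum>l<k. monom (x (i, j, l)) l)"

definition jet_minor :: "nat \<Rightarrow> nat \<Rightarrow> (nat \<Rightarrow> nat) \<Rightarrow> (nat \<Rightarrow> nat)
     \<Rightarrow> (nat \<times> nat \<times> nat \<Rightarrow> 'a::comm_ring_1) \<Rightarrow> 'a poly" where
  "jet_minor k r f g x = det (mat r r (\<lambda>(a, b). jet_entry k x (f a) (g b)))"

text \<open>Z^{m,n}_{r,k}: the common zeros of the coefficients of t^l (l < k) of all r\<times>r minors
  of X(t), i.e. the zero set of the ideal I^{m,n}_{r,k} (evaluation commutes with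
  determinants and with the quotient S[t] \<rightarrow> S[t]/(t^k)).\<close>
definition jet_det_variety :: "nat \<Rightarrow> nat \<Rightarrow> nat \<Rightarrow> nat \<Rightarrow> (nat \<times> nat \<times> nat \<Rightarrow> 'a::comm_ring_1) set" where
  "jet_det_variety m n r k =
     {x \<in> affine_space (jet_vars m n k).
        \<forall>f g. strict_mono_on {0..<r} f \<and> f ` {0..<r} \<subseteq> {0..<m} \<and>
              strict_mono_on {0..<r} g \<and> g ` {0..<r} \<subseteq> {0..<n} \<longrightarrow>
              (\<forall>l<k. coeff (jet_minor k r f g x) l = 0)}"

end

theory Submission
  imports Defs "HOL-Number_Theory.Cong"
begin

text \<open>Put \<open>p = r - 2\<close>. For \<open>0 \<le> i \<le> k/2\<close>, truncating \<open>A B + t\<^sup>i c d\<^sup>T + t\<^sup>k\<^sup>-\<^sup>i E\<close> (with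
  \<open>A\<close> of width \<open>p\<close>) modulo \<open>t\<^sup>k\<close> parametrises a subset of \<open>\<Z>\<close>: in a Cauchy--Binet
  expansion of an \<open>r\<close>-minor every term picks up \<open>t\<^sup>i\<close> and \<open>t\<^sup>k\<^sup>-\<^sup>i\<close>. The closure \<open>C\<^sub>i\<close> of the
  image is irreducible. Conversely, a point of \<open>\<Z>\<close> whose leading \<open>p\<close>-minor is a unit,
  whose leading \<open>(p + 1)\<close>-minor has order \<open>i\<close> and whose leading \<open>(p + 3)\<close>-minor has order
  \<open>2 k - i\<close> lies in the image: the Schur complement of the leading \<open>p \<times> p\<close> block has all
  \<open>2 \<times> 2\<close> minors divisible by \<open>t\<^sup>k\<close> and is therefore of rank one modulo \<open>t\<^sup>k\<^sup>-\<^sup>i\<close>. These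
  conditions cut out an open subset of \<open>\<Z>\<close> meeting \<open>C\<^sub>i\<close>, so \<open>C\<^sub>i\<close> is a component, and they
  fail on \<open>C\<^sub>j\<close> for \<open>j \<noteq> i\<close>, so the \<open>C\<^sub>i\<close> are distinct.\<close>

section \<open>Polynomial functions\<close>

lemma polyfun_sum:
  assumes "finite S" "\<And>i. i \<in> S \<Longrightarrow> f i \<in> polyfun V"
  shows "(\<lambda>x. \<Sum>i\<in>S. f i x) \<in> polyfun V"
  using assms by (induction S rule: finite_induct) (auto intro: polyfun.intros)

lemma polyfun_compose:
  assumes "p \<in> polyfun V" "\<And>v. v \<in> V \<Longrightarrow> (\<lambda>y. \<phi> y v) \<in> polyfun W"
  shows "(\<lambda>y. p (\<phi> y)) \<in> polyfun W"
  using assms by (induction p rule: polyfun.induct) (auto intro: polyfun.intros)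

lemma polyfun_fun_upd:
  assumes "p \<in> polyfun V" "v \<notin> V"
  shows "p (y(v := s)) = p y"
  using assms by (induction p rule: polyfun.induct) auto

lemma polyfun_empty_const:
  assumes "p \<in> polyfun {}"
  shows "p y = p z"
  using assms by (induction p rule: polyfun.induct) auto

text \<open>Polynomials in \<open>t\<close> over the ring of polynomial functions on \<open>\<A>\<^sup>V\<close>, represented as
  maps from points to \<^typ>\<open>'a poly\<close>.\<close>
definition polyfun_poly :: "'v set \<Rightarrow> (('v \<Rightarrow> 'a::comm_ring_1) \<Rightarrow> 'a poly) set" where
  "polyfun_poly V = {P. \<forall>l. (\<lambda>x. coeff (P x) l) \<in> polyfun V}"

lemma polyfun_polyD: "P \<in> polyfun_poly V \<Longrightarrow> (\<lambda>x. coeff (P x) l) \<in> polyfun V"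
  unfolding polyfun_poly_def by auto

lemma polyfun_poly_const: "(\<lambda>x. c) \<in> polyfun_poly V"
  unfolding polyfun_poly_def by (auto intro: polyfun.pf_const)

lemma polyfun_poly_monom:
  assumes "v \<in> V"
  shows "(\<lambda>x. monom (x v) l) \<in> polyfun_poly V"
proof -
  have "(\<lambda>x. if l = l' then x v else 0) \<in> polyfun V" for l'
    using polyfun.pf_var[OF assms] polyfun.pf_const[of 0 V] by (cases "l = l'") auto
  then show ?thesis unfolding polyfun_poly_def by simp blast
qed

lemma polyfun_poly_add:
  "P \<in> polyfun_poly V \<Longrightarrow> Q \<in> polyfun_poly V \<Longrightarrow> (\<lambda>x. P x + Q x) \<in> polyfun_poly V"
  unfolding polyfun_poly_def by (auto intro: polyfun.pf_add)

lemma polyfun_poly_mult: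
  assumes P: "P \<in> polyfun_poly V" and Q: "Q \<in> polyfun_poly V"
  shows "(\<lambda>x. P x * Q x) \<in> polyfun_poly V"
proof -
  have "(\<lambda>x. coeff (P x * Q x) l) \<in> polyfun V" for l
    unfolding coeff_mult
    by (rule polyfun_sum) (auto intro: polyfun.pf_mult polyfun_polyD[OF P] polyfun_polyD[OF Q])
  then show ?thesis unfolding polyfun_poly_def by blast
qed

lemma polyfun_poly_sum:
  assumes "finite S" "\<And>i. i \<in> S \<Longrightarrow> P i \<in> polyfun_poly V"
  shows "(\<lambda>x. \<Sum>i\<in>S. P i x) \<in> polyfun_poly V"
  using assms by (induction S rule: finite_induct) (auto intro: polyfun_poly_const polyfun_poly_add)

lemma polyfun_poly_prod:
  assumes "finite S" "\<And>i. i \<in> S \<Longrightarrow> P i \<in> polyfun_poly V"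
  shows "(\<lambda>x. \<Prod>i\<in>S. P i x) \<in> polyfun_poly V"
  using assms by (induction S rule: finite_induct) (auto intro: polyfun_poly_const polyfun_poly_mult)

lemma polyfun_poly_det:
  assumes "\<And>a b. a < s \<Longrightarrow> b < s \<Longrightarrow> (\<lambda>x. M x a b) \<in> polyfun_poly V"
  shows "(\<lambda>x. det (mat s s (\<lambda>(a, b). M x a b))) \<in> polyfun_poly V"
proof -
  have "det (mat s s (\<lambda>(a, b). M x a b)) =
      (\<Sum>\<pi>\<in>{\<pi>. \<pi> permutes {0..<s}}. signof \<pi> * (\<Prod>i = 0..<s. M x i (\<pi> i)))" for x
    by (subst det_def') (auto intro!: sum.cong prod.cong simp: permutes_in_image)
  moreover have "(\<lambda>x. \<Sum>\<pi>\<in>{\<pi>. \<pi> permutes {0..<s}}. signof \<pi> * (\<Prod>i = 0..<s. M x i (\<pi> i)))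
      \<in> polyfun_poly V"
    by (intro polyfun_poly_sum polyfun_poly_mult[OF polyfun_poly_const] polyfun_poly_prod)
      (auto simp: finite_permutations assms permutes_in_image)
  ultimately show ?thesis by simp
qed

lemma polyfun_poly_fun_upd:
  assumes "P \<in> polyfun_poly W" "v \<notin> W"
  shows "P (y(v := s)) = P y"
  by (rule poly_eqI) (rule polyfun_fun_upd[OF polyfun_polyD[OF assms(1)] assms(2)])

lemma polyfun_insert_poly:
  assumes "p \<in> polyfun (insert v W)"
  shows "\<exists>P \<in> polyfun_poly W. \<forall>y. p y = poly (P y) (y v)"
  using assms
proof (induction p rule: polyfun.induct)
  case (pf_const c)
  show ?case by (rule bexI[of _ "\<lambda>y. [:c:]"]) (auto intro: polyfun_poly_const)
next
  case (pf_var w)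
  show ?case
  proof (cases "w = v")
    case True
    show ?thesis by (rule bexI[of _ "\<lambda>y. [:0, 1:]"]) (auto simp: True intro: polyfun_poly_const)
  next
    case False
    with pf_var have "w \<in> W" by simp
    show ?thesis
      by (rule bexI[of _ "\<lambda>y. monom (y w) 0"]) (auto intro: polyfun_poly_monom[OF \<open>w \<in> W\<close>] simp: poly_monom)
  qed
next
  case (pf_add p q)
  then obtain P Q where "P \<in> polyfun_poly W" "Q \<in> polyfun_poly W"
    "\<forall>y. p y = poly (P y) (y v)" "\<forall>y. q y = poly (Q y) (y v)" by blast
  then show ?case by (intro bexI[of _ "\<lambda>y. P y + Q y"]) (auto intro: polyfun_poly_add)
next
  case (pf_mult p q)
  then obtain P Q where "P \<in> polyfun_poly W" "Q \<in> polyfun_poly W"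
    "\<forall>y. p y = poly (P y) (y v)" "\<forall>y. q y = poly (Q y) (y v)" by blast
  then show ?case by (intro bexI[of _ "\<lambda>y. P y * Q y"]) (auto intro: polyfun_poly_mult)
qed

text \<open>The ring of polynomial functions in finitely many variables over an infinite field is a
  domain: adjoin one variable at a time and use that a nonzero univariate polynomial has a
  non-root.\<close>
lemma polyfun_mult_nonzero:
  fixes p q :: "('v \<Rightarrow> 'a::field) \<Rightarrow> 'a"
  assumes "infinite (UNIV :: 'a set)" "finite W"
    and "p \<in> polyfun W" "q \<in> polyfun W" "p y\<^sub>1 \<noteq> 0" "q y\<^sub>2 \<noteq> 0"
  shows "\<exists>y. p y * q y \<noteq> 0"
  using assms(2-)
proof (induction W arbitrary: p q y\<^sub>1 y\<^sub>2 rule: finite_induct)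
  case empty
  then show ?case using polyfun_empty_const[of p] polyfun_empty_const[of q] by (metis mult_eq_0_iff)
next
  case (insert v W)
  obtain P where P: "P \<in> polyfun_poly W" "\<And>y. p y = poly (P y) (y v)"
    using polyfun_insert_poly[OF insert.prems(1)] by blast
  obtain Q where Q: "Q \<in> polyfun_poly W" "\<And>y. q y = poly (Q y) (y v)"
    using polyfun_insert_poly[OF insert.prems(2)] by blast
  obtain l\<^sub>1 where l\<^sub>1: "coeff (P y\<^sub>1) l\<^sub>1 \<noteq> 0"
    using insert.prems(3) P(2) by (metis leading_coeff_0_iff poly_0)
  obtain l\<^sub>2 where l\<^sub>2: "coeff (Q y\<^sub>2) l\<^sub>2 \<noteq> 0"
    using insert.prems(4) Q(2) by (metis leading_coeff_0_iff poly_0)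
  obtain z where "coeff (P z) l\<^sub>1 * coeff (Q z) l\<^sub>2 \<noteq> 0"
    using insert.IH[OF polyfun_polyD[OF P(1)] polyfun_polyD[OF Q(1)] l\<^sub>1 l\<^sub>2] by blast
  then have "P z * Q z \<noteq> 0" by auto
  then have "finite {s. poly (P z * Q z) s = 0}" by (rule poly_roots_finite)
  with assms(1) obtain s where s: "poly (P z * Q z) s \<noteq> 0"
    using ex_new_if_finite by blast
  have "p (z(v := s)) * q (z(v := s)) = poly (P z * Q z) s"
    using P Q polyfun_poly_fun_upd[OF P(1) insert.hyps(2)] polyfun_poly_fun_upd[OF Q(1) insert.hyps(2)]
    by simp
  with s show ?case by metis
qed

lemma alg_closed_infinite:
  assumes "alg_closed TYPE('a::field)"
  shows "infinite (UNIV :: 'a set)"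
proof
  assume fin: "finite (UNIV :: 'a set)"
  define q :: "'a poly" where "q = (\<Prod>a\<in>UNIV. [:-a, 1:])"
  have "degree q = card (UNIV :: 'a set)"
    unfolding q_def by (subst degree_prod_eq_sum_degree) (auto simp: fin)
  with fin have "degree (q + 1) > 0" by (simp add: degree_add_eq_left card_gt_0_iff)
  then obtain x where "poly (q + 1) x = 0" using assms unfolding alg_closed_def by blast
  moreover have "poly q x = 0" unfolding q_def poly_prod using fin by simp
  ultimately show False by simp
qed

section \<open>Zariski closures and irreducible components\<close>

definition zariski_closure :: "'v set \<Rightarrow> ('v \<Rightarrow> 'a::comm_ring_1) set \<Rightarrow> ('v \<Rightarrow> 'a) set" where
  "zariski_closure V S = {x \<in> affine_space V. \<forall>p\<in>polyfun V. (\<forall>s\<in>S. p s = 0) \<longrightarrow> p x = 0}"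

lemma zariski_closed_closure: "zariski_closed V (zariski_closure V S)"
  unfolding zariski_closed_def zariski_closure_def
  by (rule exI[of _ "{p \<in> polyfun V. \<forall>s\<in>S. p s = 0}"]) auto

lemma zariski_closure_superset: "S \<subseteq> affine_space V \<Longrightarrow> S \<subseteq> zariski_closure V S"
  unfolding zariski_closure_def by auto

lemma zariski_closure_minimal:
  "zariski_closed V A \<Longrightarrow> S \<subseteq> A \<Longrightarrow> zariski_closure V S \<subseteq> A"
  unfolding zariski_closed_def zariski_closure_def by blast

lemma zariski_closure_vanishing:
  "x \<in> zariski_closure V S \<Longrightarrow> p \<in> polyfun V \<Longrightarrow> (\<And>s. s \<in> S \<Longrightarrow> p s = 0) \<Longrightarrow> p x = 0"
  unfolding zariski_closure_def by blast

lemma zariski_closed_separating: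
  assumes "zariski_closed V A" "x \<in> affine_space V" "x \<notin> A"
  shows "\<exists>p\<in>polyfun V. (\<forall>a\<in>A. p a = 0) \<and> p x \<noteq> 0"
proof -
  obtain P where P: "P \<subseteq> polyfun V" "A = {x \<in> affine_space V. \<forall>p\<in>P. p x = 0}"
    using assms(1) unfolding zariski_closed_def by blast
  with assms(2,3) obtain p where "p \<in> P" "p x \<noteq> 0" by blast
  with P show ?thesis by blast
qed

lemma zariski_closed_Int_zero_set:
  assumes "zariski_closed V A" "f \<in> polyfun V"
  shows "zariski_closed V {x \<in> A. f x = 0}"
proof -
  obtain P where "P \<subseteq> polyfun V" "A = {x \<in> affine_space V. \<forall>p\<in>P. p x = 0}"
    using assms(1) unfolding zariski_closed_def by blast
  then have "insert f P \<subseteq> polyfun V \<and>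
      {x \<in> A. f x = 0} = {x \<in> affine_space V. \<forall>p\<in>insert f P. p x = 0}"
    using assms(2) by auto
  then show ?thesis unfolding zariski_closed_def by blast
qed

lemma zariski_closed_Int:
  assumes "zariski_closed V A" "zariski_closed V B"
  shows "zariski_closed V (A \<inter> B)"
proof -
  obtain P where P: "P \<subseteq> polyfun V" "A = {x \<in> affine_space V. \<forall>p\<in>P. p x = 0}"
    using assms(1) unfolding zariski_closed_def by blast
  obtain Q where Q: "Q \<subseteq> polyfun V" "B = {x \<in> affine_space V. \<forall>p\<in>Q. p x = 0}"
    using assms(2) unfolding zariski_closed_def by blast
  have "P \<union> Q \<subseteq> polyfun V \<and> A \<inter> B = {x \<in> affine_space V. \<forall>p\<in>P \<union> Q. p x = 0}"
    using P Q by auto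
  then show ?thesis unfolding zariski_closed_def by blast
qed

lemma zariski_irreducible_closure_image:
  fixes \<phi> :: "('u \<Rightarrow> 'a) \<Rightarrow> ('v \<Rightarrow> 'a::field)"
  assumes "infinite (UNIV :: 'a set)" "finite W"
    and \<phi>_affine: "\<And>y. \<phi> y \<in> affine_space V"
    and \<phi>_polyfun: "\<And>v. v \<in> V \<Longrightarrow> (\<lambda>y. \<phi> y v) \<in> polyfun W"
  shows "zariski_irreducible V (zariski_closure V (range \<phi>))"
proof -
  let ?C = "zariski_closure V (range \<phi>)"
  have range_sub: "range \<phi> \<subseteq> ?C" using \<phi>_affine by (intro zariski_closure_superset) auto
  have range_not_subset: "\<exists>y. \<phi> y \<notin> A" if A: "zariski_closed V A" "A \<subseteq> ?C" "?C \<noteq> A" for A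
    using zariski_closure_minimal[OF A(1)] A(2,3) by blast
  have split: "?C = A \<or> ?C = B"
    if A: "zariski_closed V A" and B: "zariski_closed V B" and CAB: "?C = A \<union> B" for A B
  proof (rule ccontr)
    assume "\<not> (?C = A \<or> ?C = B)"
    then obtain y\<^sub>1 y\<^sub>2 where y\<^sub>1: "\<phi> y\<^sub>1 \<notin> A" and y\<^sub>2: "\<phi> y\<^sub>2 \<notin> B"
      using range_not_subset[OF A] range_not_subset[OF B] CAB by auto
    obtain p where p: "p \<in> polyfun V" "\<forall>a\<in>A. p a = 0" "p (\<phi> y\<^sub>1) \<noteq> 0"
      using zariski_closed_separating[OF A \<phi>_affine y\<^sub>1] by blast
    obtain q where q: "q \<in> polyfun V" "\<forall>b\<in>B. q b = 0" "q (\<phi> y\<^sub>2) \<noteq> 0"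
      using zariski_closed_separating[OF B \<phi>_affine y\<^sub>2] by blast
    have "(\<lambda>y. p (\<phi> y)) \<in> polyfun W" "(\<lambda>y. q (\<phi> y)) \<in> polyfun W"
      using polyfun_compose[of _ V \<phi> W] p(1) q(1) \<phi>_polyfun by blast+
    then obtain y where y: "p (\<phi> y) * q (\<phi> y) \<noteq> 0"
      using polyfun_mult_nonzero[OF assms(1,2)] p(3) q(3) by blast
    have "\<phi> y \<in> A \<union> B" using range_sub CAB by blast
    then show False using p(2) q(2) y by auto
  qed
  have "?C \<noteq> {}" using range_sub by blast
  then show ?thesis
    unfolding zariski_irreducible_def using zariski_closed_closure split by blast
qed

text \<open>An irreducible closed subset of \<open>Z\<close> containing the nonempty open part
  \<open>Z \<inter> {f \<noteq> 0}\<close> of \<open>Z\<close> is a component: a larger irreducible \<open>D\<close> is covered by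
  \<open>D \<inter> {f = 0}\<close> and \<open>D \<inter> C\<close>.\<close>
lemma irreducible_componentI:
  assumes C: "zariski_irreducible V C" "C \<subseteq> Z"
    and f: "f \<in> polyfun V" "x\<^sub>0 \<in> C" "f x\<^sub>0 \<noteq> 0"
    and open_part: "\<And>x. x \<in> Z \<Longrightarrow> f x \<noteq> 0 \<Longrightarrow> x \<in> C"
  shows "C \<in> irreducible_components V Z"
proof -
  have "D = C" if D: "D \<subseteq> Z" "zariski_irreducible V D" "C \<subseteq> D" for D
  proof -
    have closed: "zariski_closed V D" "zariski_closed V C"
      using C(1) D(2) unfolding zariski_irreducible_def by blast+
    have "D = {x \<in> D. f x = 0} \<union> (D \<inter> C)" using open_part D(1) by blast
    then have "D = {x \<in> D. f x = 0} \<or> D = D \<inter> C"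
      using D(2) zariski_closed_Int_zero_set[OF closed(1) f(1)] zariski_closed_Int[OF closed]
      unfolding zariski_irreducible_def by blast
    moreover have "D \<noteq> {x \<in> D. f x = 0}" using D(3) f(2,3) by blast
    ultimately show "D = C" using D(3) by blast
  qed
  then show ?thesis unfolding irreducible_components_def using C by blast
qed

section \<open>Divisibility of minors by powers of \<open>t\<close>\<close>

lemma cong_monom_coeff:
  fixes P Q :: "'a::field poly"
  assumes "[P = Q] (mod monom 1 k)" "l < k"
  shows "coeff P l = coeff Q l"
  using assms by (simp add: cong_iff_dvd_diff monom_1_dvd_iff')

lemma cong_poly_cutoff: "[poly_cutoff k P = P] (mod monom 1 k)"
  by (simp add: cong_iff_dvd_diff monom_1_dvd_iff' coeff_poly_cutoff)

lemma monom_dvd_cancel_left: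
  fixes X :: "'a::idom poly"
  assumes "monom 1 (a + b) dvd monom 1 a * X"
  shows "monom 1 b dvd X"
proof -
  have "monom 1 a * monom 1 b dvd monom 1 a * X" using assms by (simp add: mult_monom)
  then show ?thesis by (subst (asm) dvd_mult_cancel_left) (auto simp: monom_eq_0_iff)
qed

lemma inverse_mod_monom:
  fixes P :: "'a::field poly"
  assumes "coeff P 0 \<noteq> 0"
  shows "\<exists>w. [w * P = 1] (mod monom 1 N)"
proof (induction N)
  case 0
  then show ?case by (auto simp: cong_iff_dvd_diff monom_1_dvd_iff')
next
  case (Suc N)
  then obtain w R where wR: "w * P - 1 = monom 1 N * R" by (auto simp: cong_iff_dvd_diff elim!: dvdE)
  define c where "c = coeff R 0 / coeff P 0"
  have "coeff (R - smult c P) 0 = 0" using assms by (simp add: c_def)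
  then have "monom 1 1 dvd R - smult c P" by (simp add: monom_1_dvd_iff')
  then obtain S where S: "R - smult c P = monom 1 1 * S" unfolding dvd_def by blast
  have "(w - monom c N) * P - 1 = monom 1 N * (R - smult c P)"
    using wR by (simp add: algebra_simps monom_altdef)
  also have "\<dots> = monom 1 (Suc N) * S" using S by (simp add: mult_monom flip: mult.assoc)
  finally have "monom 1 (Suc N) dvd (w - monom c N) * P - 1" by simp
  then show ?case unfolding cong_iff_dvd_diff by blast
qed

lemma monom_dvd_mult_cancel_unit:
  fixes d M :: "'a::field poly"
  assumes "coeff d 0 \<noteq> 0" "monom 1 e dvd d * M"
  shows "monom 1 e dvd M"
proof -
  obtain w where "[w * d = 1] (mod monom 1 e)" using inverse_mod_monom[OF assms(1)] by blast
  then have "[w * d * M = M] (mod monom 1 e)" using cong_scalar_right by fastforce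
  moreover have "[w * d * M = 0] (mod monom 1 e)"
    using assms(2) by (simp add: cong_0_iff mult.assoc)
  ultimately show ?thesis by (metis cong_0_iff cong_sym cong_trans)
qed

text \<open>Expansion of a minor of a product \<open>L R\<close> in the spirit of Cauchy--Binet, but summing
  over all row selections \<open>\<sigma>\<close> of \<open>R\<close>, not only increasing ones.\<close>
lemma det_mult_expansion:
  fixes L R :: "nat \<Rightarrow> nat \<Rightarrow> 'a::comm_ring_1"
  shows "det (mat s s (\<lambda>(i, j). \<Sum>c<N. L i c * R c j)) =
    (\<Sum>\<sigma>\<in>Pi\<^sub>E {0..<s} (\<lambda>_. {0..<N}).
       (\<Prod>i\<in>{0..<s}. L i (\<sigma> i)) * det (mat s s (\<lambda>(i, j). R (\<sigma> i) j)))"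
proof -
  let ?P = "{\<pi>. \<pi> permutes {0..<s}}"
  let ?S = "Pi\<^sub>E {0..<s} (\<lambda>_. {0..<N})"
  have det_R: "det (mat s s (\<lambda>(i, j). R (\<sigma> i) j)) =
      (\<Sum>\<pi>\<in>?P. signof \<pi> * (\<Prod>i\<in>{0..<s}. R (\<sigma> i) (\<pi> i)))" for \<sigma>
    by (subst det_def'[of _ s]) (auto intro!: sum.cong prod.cong simp: permutes_in_image)
  have "det (mat s s (\<lambda>(i, j). \<Sum>c<N. L i c * R c j)) =
        (\<Sum>\<pi>\<in>?P. signof \<pi> * (\<Prod>i\<in>{0..<s}. \<Sum>c\<in>{0..<N}. L i c * R c (\<pi> i)))"
    by (subst det_def'[of _ s])
      (auto intro!: sum.cong prod.cong simp: permutes_in_image lessThan_atLeast0)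
  also have "\<dots> = (\<Sum>\<pi>\<in>?P. signof \<pi> * (\<Sum>\<sigma>\<in>?S. \<Prod>i\<in>{0..<s}. L i (\<sigma> i) * R (\<sigma> i) (\<pi> i)))"
    by (subst prod_sum_PiE) auto
  also have "\<dots> = (\<Sum>\<sigma>\<in>?S. \<Sum>\<pi>\<in>?P.
      (\<Prod>i\<in>{0..<s}. L i (\<sigma> i)) * (signof \<pi> * (\<Prod>i\<in>{0..<s}. R (\<sigma> i) (\<pi> i))))"
    by (subst sum.swap) (simp add: sum_distrib_left prod.distrib algebra_simps)
  also have "\<dots> = (\<Sum>\<sigma>\<in>?S. (\<Prod>i\<in>{0..<s}. L i (\<sigma> i)) * det (mat s s (\<lambda>(i, j). R (\<sigma> i) j)))"
    by (simp add: det_R sum_distrib_left)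
  finally show ?thesis .
qed

text \<open>Only injective selections \<open>\<sigma>\<close> contribute, since otherwise \<open>R\<close> restricted to the rows
  \<open>\<sigma>\<close> has two equal rows.\<close>
lemma power_dvd_det_mult:
  fixes L R :: "nat \<Rightarrow> nat \<Rightarrow> 'a::comm_ring_1" and z :: 'a
  assumes L: "\<And>i c. i < s \<Longrightarrow> c < N \<Longrightarrow> z ^ e c dvd L i c"
    and weight: "\<And>\<sigma>. \<sigma> \<in> {0..<s} \<rightarrow> {0..<N} \<Longrightarrow> inj_on \<sigma> {0..<s} \<Longrightarrow> \<mu> \<le> (\<Sum>i<s. e (\<sigma> i))"
  shows "z ^ \<mu> dvd det (mat s s (\<lambda>(i, j). \<Sum>c<N. L i c * R c j))"
  unfolding det_mult_expansion
proof (rule dvd_sum)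
  fix \<sigma> assume \<sigma>: "\<sigma> \<in> Pi\<^sub>E {0..<s} (\<lambda>_. {0..<N})"
  show "z ^ \<mu> dvd (\<Prod>i\<in>{0..<s}. L i (\<sigma> i)) * det (mat s s (\<lambda>(i, j). R (\<sigma> i) j))"
  proof (cases "inj_on \<sigma> {0..<s}")
    case True
    have "z ^ \<mu> dvd z ^ (\<Sum>i<s. e (\<sigma> i))"
      using weight[of \<sigma>] \<sigma> True by (intro le_imp_power_dvd) (auto simp: PiE_def)
    also have "\<dots> = (\<Prod>i\<in>{0..<s}. z ^ e (\<sigma> i))" by (simp add: power_sum lessThan_atLeast0)
    also have "\<dots> dvd (\<Prod>i\<in>{0..<s}. L i (\<sigma> i))"
      by (rule prod_dvd_prod) (use \<sigma> L in \<open>auto simp: PiE_def Pi_def\<close>)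
    finally show ?thesis by simp
  next
    case False
    then obtain i i' where ii': "i < s" "i' < s" "i \<noteq> i'" "\<sigma> i = \<sigma> i'"
      unfolding inj_on_def by auto
    have "det (mat s s (\<lambda>(i, j). R (\<sigma> i) j)) = 0"
      by (rule det_identical_rows[of _ s i i']) (use ii' in \<open>auto intro!: eq_vecI\<close>)
    then show ?thesis by simp
  qed
qed

lemma sum_if_eq_card: "finite S \<Longrightarrow> (\<Sum>i\<in>S. if P i then (c::nat) else 0) = c * card {i\<in>S. P i}"
  by (simp add: sum.If_cases Int_def conj_commute)

text \<open>An injective selection of \<open>p + q\<close> columns picks at most \<open>p\<close> of weight \<open>0\<close> and at most one
  of weight \<open>j \<le> k - j\<close>.\<close>
lemma injective_weight_bound:
  fixes \<sigma> :: "nat \<Rightarrow> nat"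
  assumes inj: "inj_on \<sigma> {0..<p + q}" and "1 \<le> q" "2 * j \<le> k"
  shows "j + (q - 1) * (k - j) \<le> (\<Sum>i<p + q. if \<sigma> i < p then 0 else if \<sigma> i = p then j else k - j)"
proof -
  define I\<^sub>0 where "I\<^sub>0 = {i\<in>{0..<p + q}. \<sigma> i < p}"
  define I\<^sub>1 where "I\<^sub>1 = {i\<in>{0..<p + q}. \<sigma> i = p}"
  define I\<^sub>2 where "I\<^sub>2 = {i\<in>{0..<p + q}. p < \<sigma> i}"
  have "card I\<^sub>0 \<le> card {..<p}"
    by (rule card_inj_on_le[OF inj_on_subset[OF inj]]) (auto simp: I\<^sub>0_def)
  moreover have "card I\<^sub>1 \<le> card {p}"
    by (rule card_inj_on_le[OF inj_on_subset[OF inj]]) (auto simp: I\<^sub>1_def)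
  ultimately have card_I\<^sub>0: "card I\<^sub>0 \<le> p" and card_I\<^sub>1: "card I\<^sub>1 \<le> 1" by auto
  have "{0..<p + q} = I\<^sub>0 \<union> I\<^sub>1 \<union> I\<^sub>2" "I\<^sub>0 \<inter> I\<^sub>1 = {}" "(I\<^sub>0 \<union> I\<^sub>1) \<inter> I\<^sub>2 = {}"
    unfolding I\<^sub>0_def I\<^sub>1_def I\<^sub>2_def by auto
  then have partition: "card I\<^sub>0 + card I\<^sub>1 + card I\<^sub>2 = p + q"
    by (metis card_Un_disjoint card_atLeastLessThan diff_zero finite_Un finite_atLeastLessThan
        finite_subset sup.cobounded1 sup.cobounded2)
  have "(\<Sum>i<p + q. if \<sigma> i < p then 0 else if \<sigma> i = p then j else k - j) =
        (\<Sum>i\<in>{0..<p + q}. if \<sigma> i = p then j else 0) + (\<Sum>i\<in>{0..<p + q}. if p < \<sigma> i then k - j else 0)"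
    by (subst sum.distrib[symmetric]) (auto simp: lessThan_atLeast0 intro!: sum.cong)
  also have "\<dots> = j * card I\<^sub>1 + (k - j) * card I\<^sub>2"
    unfolding I\<^sub>1_def I\<^sub>2_def by (simp add: sum_if_eq_card)
  finally have sum_eq: "(\<Sum>i<p + q. if \<sigma> i < p then 0 else if \<sigma> i = p then j else k - j) =
      j * card I\<^sub>1 + (k - j) * card I\<^sub>2" .
  show ?thesis
  proof (cases "card I\<^sub>1 = 0")
    case True
    then have "q \<le> card I\<^sub>2" using partition card_I\<^sub>0 by linarith
    then have "(k - j) * q \<le> (k - j) * card I\<^sub>2" by simp
    moreover have "(k - j) * q = (k - j) + (q - 1) * (k - j)" using assms(2) by (cases q) auto
    then have "j + (q - 1) * (k - j) \<le> (k - j) * q" using assms(3) by simp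
    ultimately show ?thesis using sum_eq True by linarith
  next
    case False
    then have "card I\<^sub>1 = 1" using card_I\<^sub>1 by simp
    moreover from this have "q - 1 \<le> card I\<^sub>2" using partition card_I\<^sub>0 by linarith
    then have "(k - j) * (q - 1) \<le> (k - j) * card I\<^sub>2" by simp
    ultimately show ?thesis using sum_eq by (simp add: mult.commute)
  qed
qed

lemma sum_lessThan_add: "(\<Sum>l<a + (b::nat). f l) = (\<Sum>l<a. f l) + (\<Sum>l<b. f (a + l))"
  by (induction b) (simp_all add: add.assoc)

definition model_matrix :: "nat \<Rightarrow> nat \<Rightarrow> nat \<Rightarrow> (nat \<Rightarrow> nat \<Rightarrow> 'a::comm_ring_1 poly)
    \<Rightarrow> (nat \<Rightarrow> nat \<Rightarrow> 'a poly) \<Rightarrow> (nat \<Rightarrow> 'a poly) \<Rightarrow> (nat \<Rightarrow> 'a poly) \<Rightarrow> (nat \<Rightarrow> nat \<Rightarrow> 'a poly)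
    \<Rightarrow> nat \<Rightarrow> nat \<Rightarrow> 'a poly" where
  "model_matrix p j k A B c d E a b =
     (\<Sum>l<p. A a l * B l b) + monom 1 j * c a * d b + monom 1 (k - j) * E a b"

lemma model_matrix_add_monom:
  assumes "j \<le> k"
  shows "model_matrix p j k A B c d E a b + monom 1 k * Q a b =
    model_matrix p j k A B c d (\<lambda>a b. E a b + monom 1 j * Q a b) a b"
proof -
  have "monom 1 k = monom 1 (k - j) * (monom 1 j :: 'a poly)"
    using assms by (simp add: mult_monom)
  then show ?thesis by (simp add: model_matrix_def algebra_simps)
qed

text \<open>Write the \<open>(p + q)\<close>-minor as a minor of the product \<open>L R\<close> with
  \<open>L = (A | t\<^sup>j c | t\<^sup>k\<^sup>-\<^sup>j I)\<close> and \<open>R = (B ; d\<^sup>T ; E)\<close>.\<close>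
lemma monom_dvd_det_model_matrix:
  assumes "2 * j \<le> k" "1 \<le> q"
  shows "monom 1 (j + (q - 1) * (k - j)) dvd
    det (mat (p + q) (p + q) (\<lambda>(a, b). model_matrix p j k A B c d E (F a) (G b)))"
proof -
  define s where "s = p + q"
  define N where "N = p + (1 + s)"
  define L where "L i l = (if l < p then A (F i) l else if l = p then monom 1 j * c (F i)
      else if l = p + 1 + i then monom 1 (k - j) else 0)" for i l
  define R where "R l b = (if l < p then B l (G b) else if l = p then d (G b)
      else E (F (l - (p + 1))) (G b))" for l b
  have entry: "(\<Sum>l<N. L i l * R l b) = model_matrix p j k A B c d E (F i) (G b)"
    if "i < s" for i b
  proof -
    have "(\<Sum>l<N. L i l * R l b) = (\<Sum>l<p. L i l * R l b) + L i p * R p b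
        + (\<Sum>l<s. L i (p + (1 + l)) * R (p + (1 + l)) b)"
      unfolding N_def by (simp only: sum_lessThan_add) (simp add: add.assoc)
    also have "(\<Sum>l<p. L i l * R l b) = (\<Sum>l<p. A (F i) l * B l (G b))"
      by (rule sum.cong) (auto simp: L_def R_def)
    also have "(\<Sum>l<s. L i (p + (1 + l)) * R (p + (1 + l)) b) =
        (\<Sum>l<s. if l = i then monom 1 (k - j) * E (F i) (G b) else 0)"
      by (rule sum.cong) (auto simp: L_def R_def)
    also have "\<dots> = monom 1 (k - j) * E (F i) (G b)" using that by simp
    finally show ?thesis by (simp add: model_matrix_def L_def R_def mult.assoc)
  qed
  have "monom 1 1 ^ (j + (q - 1) * (k - j)) dvd det (mat s s (\<lambda>(i, b). \<Sum>l<N. L i l * R l b))"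
  proof (rule power_dvd_det_mult)
    show "monom 1 1 ^ (if l < p then 0 else if l = p then j else k - j) dvd L i l" for i l
      by (auto simp: L_def monom_power)
    show "j + (q - 1) * (k - j) \<le> (\<Sum>i<s. if \<sigma> i < p then 0 else if \<sigma> i = p then j else k - j)"
      if "inj_on \<sigma> {0..<s}" for \<sigma>
      using injective_weight_bound[OF _ assms(2,1)] that by (simp add: s_def)
  qed
  moreover have "mat s s (\<lambda>(i, b). \<Sum>l<N. L i l * R l b) =
      mat s s (\<lambda>(a, b). model_matrix p j k A B c d E (F a) (G b))"
    by (rule eq_matI) (simp_all add: entry)
  ultimately show ?thesis by (simp add: monom_power s_def)
qed

text \<open>If all entries are divisible by \<open>t\<^sup>e\<close>, some entry has nonzero \<open>t\<^sup>e\<close>-coefficient and all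
  \<open>2 \<times> 2\<close> minors vanish modulo \<open>t\<^sup>k\<close>, then after dividing by \<open>t\<^sup>e\<close> that entry is a unit modulo
  \<open>t\<^sup>k\<^sup>-\<^sup>2\<^sup>e\<close>, and the usual rank-one factorisation through its row and column works.\<close>
lemma rank_one_mod_monom:
  fixes Y :: "nat \<Rightarrow> nat \<Rightarrow> 'a::field poly"
  assumes dvd: "\<And>a b. a \<in> I \<Longrightarrow> b \<in> J \<Longrightarrow> monom 1 e dvd Y a b"
    and uv: "u \<in> I" "v \<in> J" "coeff (Y u v) e \<noteq> 0"
    and minors: "\<And>a a' b b'. a \<in> I \<Longrightarrow> a' \<in> I \<Longrightarrow> b \<in> J \<Longrightarrow> b' \<in> J \<Longrightarrow>
      monom 1 k dvd Y a b * Y a' b' - Y a b' * Y a' b"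
    and ek: "2 * e \<le> k"
  shows "\<exists>c d E. \<forall>a\<in>I. \<forall>b\<in>J. Y a b = monom 1 e * c a * d b + monom 1 (k - e) * E a b"
proof -
  define Y' where "Y' a b = Y a b div monom 1 e" for a b
  have Y: "Y a b = monom 1 e * Y' a b" if "a \<in> I" "b \<in> J" for a b
    using dvd[OF that] by (simp add: Y'_def)
  have "coeff (Y' u v) 0 \<noteq> 0" using uv Y[OF uv(1,2)] by (simp add: coeff_monom_mult)
  then obtain w where w: "[w * Y' u v = 1] (mod monom 1 (k - 2 * e))"
    using inverse_mod_monom by blast
  have minor': "[Y' u v * Y' a b = Y' u b * Y' a v] (mod monom 1 (k - 2 * e))"
    if ab: "a \<in> I" "b \<in> J" for a b
  proof -
    have "monom 1 (2 * e) = monom 1 e * (monom 1 e :: 'a poly)" by (simp add: mult_monom mult_2)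
    then have "monom 1 (2 * e) * (Y' u v * Y' a b - Y' u b * Y' a v) = Y u v * Y a b - Y u b * Y a v"
      using Y uv ab by (simp add: algebra_simps)
    then have "monom 1 (2 * e + (k - 2 * e)) dvd monom 1 (2 * e) * (Y' u v * Y' a b - Y' u b * Y' a v)"
      using minors[OF uv(1) ab(1) uv(2) ab(2)] ek by simp
    then show ?thesis unfolding cong_iff_dvd_diff by (rule monom_dvd_cancel_left)
  qed
  define c where "c a = Y' a v" for a
  define d where "d b = w * Y' u b" for b
  define E where "E a b = (Y' a b - c a * d b) div monom 1 (k - 2 * e)" for a b
  have "Y a b = monom 1 e * c a * d b + monom 1 (k - e) * E a b" if ab: "a \<in> I" "b \<in> J" for a b
  proof -
    have "[w * (Y' u v * Y' a b) = Y' a b] (mod monom 1 (k - 2 * e))"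
      using cong_scalar_right[OF w, of "Y' a b"] by (simp add: mult.assoc)
    moreover have "[w * (Y' u v * Y' a b) = c a * d b] (mod monom 1 (k - 2 * e))"
      using cong_scalar_left[OF minor'[OF ab], of w] by (simp add: c_def d_def ac_simps)
    ultimately have "[Y' a b = c a * d b] (mod monom 1 (k - 2 * e))"
      using cong_sym cong_trans by blast
    then have Y': "Y' a b = c a * d b + monom 1 (k - 2 * e) * E a b"
      unfolding E_def cong_iff_dvd_diff by (simp add: eq_diff_eq[symmetric])
    have mm: "monom 1 e * monom 1 (k - 2 * e) = (monom 1 (k - e) :: 'a poly)"
      using ek by (simp add: mult_monom)
    have "Y a b = monom 1 e * (c a * d b + monom 1 (k - 2 * e) * E a b)"
      using Y[OF ab] Y' by simp
    also have "\<dots> = monom 1 e * c a * d b + monom 1 (k - e) * E a b"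
      by (simp only: distrib_left mult.assoc[symmetric] mm)
    finally show ?thesis .
  qed
  then show ?thesis by blast
qed

section \<open>Schur complements\<close>

lemma det_mat_2:
  fixes Y :: "nat \<Rightarrow> nat \<Rightarrow> 'a::idom"
  shows "det (mat 2 2 (\<lambda>(i, j). Y i j)) = Y 0 0 * Y 1 1 - Y 0 1 * Y 1 0"
proof -
  define A where "A = mat 1 1 (\<lambda>_. Y 0 0)"
  define B where "B = mat 1 1 (\<lambda>_. Y 0 1)"
  define C where "C = mat 1 1 (\<lambda>_. Y 1 0)"
  define D where "D = mat 1 1 (\<lambda>_. Y 1 1)"
  have one: "i < Suc (Suc 0) \<Longrightarrow> 0 < i \<Longrightarrow> i = Suc 0" for i :: nat by simp
  have "mat 2 2 (\<lambda>(i, j). Y i j) = four_block_mat A B C D"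
    by (rule eq_matI) (auto simp: A_def B_def C_def D_def dest!: one)
  moreover have "C * D = D * C"
    by (rule eq_matI) (auto simp: C_def D_def scalar_prod_def)
  then have "det (four_block_mat A B C D) = det (A * D - B * C)"
    by (intro det_four_block_mat) (auto simp: A_def B_def C_def D_def)
  moreover have "det (A * D - B * C) = (A * D - B * C) $$ (0, 0)"
    by (rule det_single) (auto simp: A_def B_def C_def D_def)
  ultimately show ?thesis by (simp add: A_def B_def C_def D_def scalar_prod_def)
qed

lemma det_mat_diagonal:
  fixes d :: "nat \<Rightarrow> 'a::comm_ring_1"
  shows "det (mat s s (\<lambda>(i, j). if i = j then d i else 0)) = (\<Prod>i<s. d i)"
proof -
  have "det (mat s s (\<lambda>(i, j). if i = j then d i else 0)) =
      prod_list (diag_mat (mat s s (\<lambda>(i, j). if i = j then d i else 0)))"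
    by (rule det_upper_triangular) (auto simp: upper_triangular_def)
  also have "\<dots> = prod_list (map d [0..<s])"
    unfolding diag_mat_def by (intro arg_cong[where f = prod_list] map_cong) auto
  also have "\<dots> = (\<Prod>i<s. d i)" by (induction s) auto
  finally show ?thesis .
qed

text \<open>Block elimination with the adjugate in place of the inverse of \<open>P\<close>.\<close>
lemma det_four_block_mat_adj:
  fixes P :: "'a::idom mat"
  assumes P: "P \<in> carrier_mat p p" and B: "B \<in> carrier_mat p q"
    and C: "C \<in> carrier_mat q p" and D: "D \<in> carrier_mat q q"
  shows "det P ^ q * det (four_block_mat P B C D) = det P * det (det P \<cdot>\<^sub>m D - C * adj_mat P * B)"
proof -
  define \<delta> where "\<delta> = det P"
  define K where "K = C * adj_mat P"
  have adj: "adj_mat P \<in> carrier_mat p p" "adj_mat P * P = \<delta> \<cdot>\<^sub>m 1\<^sub>m p"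
    using adj_mat[OF P] by (auto simp: \<delta>_def)
  have K: "K \<in> carrier_mat q p" unfolding K_def using C adj by auto
  define L where "L = four_block_mat (1\<^sub>m p) (0\<^sub>m p q) (- K) (\<delta> \<cdot>\<^sub>m 1\<^sub>m q)"
  have L: "L \<in> carrier_mat (p + q) (p + q)" unfolding L_def by simp
  have det_L: "det L = \<delta> ^ q"
    unfolding L_def by (subst det_four_block_mat_upper_right_zero[of _ p _ q]) (use K in auto)
  have scale_C: "(\<delta> \<cdot>\<^sub>m 1\<^sub>m q) * C = \<delta> \<cdot>\<^sub>m C" and scale_D: "(\<delta> \<cdot>\<^sub>m 1\<^sub>m q) * D = \<delta> \<cdot>\<^sub>m D"
    using C D by (simp_all add: mult_smult_assoc_mat[OF one_carrier_mat] left_mult_one_mat)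
  have "K * P = C * (adj_mat P * P)" unfolding K_def using C adj P by (simp add: assoc_mult_mat)
  also have "\<dots> = \<delta> \<cdot>\<^sub>m C"
    using C by (simp add: adj mult_smult_distrib[OF C one_carrier_mat] right_mult_one_mat[OF C])
  finally have lower_left: "- (K * P) + (\<delta> \<cdot>\<^sub>m 1\<^sub>m q) * C = 0\<^sub>m q p"
    using uminus_l_inv_mat[OF smult_carrier_mat[OF C]] by (simp add: scale_C)
  have "- (K * B) + (\<delta> \<cdot>\<^sub>m 1\<^sub>m q) * D = \<delta> \<cdot>\<^sub>m D + - (K * B)"
    using K B D by (simp add: scale_D comm_add_mat[of _ q q])
  also have "\<dots> = \<delta> \<cdot>\<^sub>m D - C * adj_mat P * B"
    using K B D by (simp add: K_def minus_add_uminus_mat[of _ q q])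
  finally have lower_right: "- (K * B) + (\<delta> \<cdot>\<^sub>m 1\<^sub>m q) * D = \<delta> \<cdot>\<^sub>m D - C * adj_mat P * B" .
  have Y: "\<delta> \<cdot>\<^sub>m D - C * adj_mat P * B \<in> carrier_mat q q" using B C D adj by auto
  have X: "four_block_mat P B C D \<in> carrier_mat (p + q) (p + q)" using P D by simp
  have "\<delta> ^ q * det (four_block_mat P B C D) = det (L * four_block_mat P B C D)"
    by (simp add: det_mult[OF L X] det_L)
  also have "L * four_block_mat P B C D = four_block_mat P B (0\<^sub>m q p) (\<delta> \<cdot>\<^sub>m D - C * adj_mat P * B)"
    unfolding L_def using P B C D K
    by (subst mult_four_block_mat) (auto simp: lower_left lower_right)
  also have "det \<dots> = \<delta> * det (\<delta> \<cdot>\<^sub>m D - C * adj_mat P * B)"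
    using det_four_block_mat_lower_left_zero[OF P B refl Y] by (simp add: \<delta>_def)
  finally show ?thesis by (simp add: \<delta>_def)
qed

definition pad_index :: "nat \<Rightarrow> (nat \<Rightarrow> nat) \<Rightarrow> nat \<Rightarrow> nat" where
  "pad_index p F a = (if a < p then a else F (a - p))"

lemma strict_mono_on_pad_index:
  assumes "p \<le> F 0" "F 0 < F 1"
  shows "strict_mono_on {0..<p + 2} (pad_index p F)"
proof (rule strict_mono_onI)
  fix a b assume "a \<in> {0..<p + 2}" "b \<in> {0..<p + 2}" "a < b"
  then consider "b < p" | "a < p" "b = p" | "a < p" "b = p + 1" | "a = p" "b = p + 1" by fastforce
  then show "pad_index p F a < pad_index p F b"
    using assms \<open>a < b\<close> by cases (auto simp: pad_index_def)
qed

text \<open>The Schur complement of the leading \<open>p \<times> p\<close> block of \<open>M\<close>, multiplied by the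
  determinant \<open>\<delta>\<close> of that block so that no division is needed.\<close>
definition schur_compl :: "nat \<Rightarrow> (nat \<Rightarrow> nat \<Rightarrow> 'a::comm_ring_1) \<Rightarrow> nat \<Rightarrow> nat \<Rightarrow> 'a" where
  "schur_compl p M a b = det (mat p p (\<lambda>(a, b). M a b)) * M a b -
     (\<Sum>c<p. \<Sum>c'<p. M a c * adj_mat (mat p p (\<lambda>(a, b). M a b)) $$ (c, c') * M c' b)"

lemma det_schur_compl:
  fixes M :: "nat \<Rightarrow> nat \<Rightarrow> 'a::idom"
  assumes "1 \<le> q" and \<delta>: "det (mat p p (\<lambda>(a, b). M a b)) \<noteq> 0"
  shows "det (mat p p (\<lambda>(a, b). M a b)) ^ (q - 1) *
      det (mat (p + q) (p + q) (\<lambda>(a, b). M (pad_index p F a) (pad_index p G b)))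
    = det (mat q q (\<lambda>(i, j). schur_compl p M (F i) (G j)))"
proof -
  define P where "P = mat p p (\<lambda>(a, b). M a b)"
  define B where "B = mat p q (\<lambda>(a, j). M a (G j))"
  define C where "C = mat q p (\<lambda>(i, b). M (F i) b)"
  define D where "D = mat q q (\<lambda>(i, j). M (F i) (G j))"
  have P: "P \<in> carrier_mat p p" by (simp add: P_def)
  have carrier: "B \<in> carrier_mat p q" "C \<in> carrier_mat q p" "D \<in> carrier_mat q q"
    "adj_mat P \<in> carrier_mat p p"
    unfolding B_def C_def D_def using adj_mat(1)[OF P] by auto
  have "mat (p + q) (p + q) (\<lambda>(a, b). M (pad_index p F a) (pad_index p G b)) = four_block_mat P B C D"
    by (rule eq_matI) (auto simp: P_def B_def C_def D_def pad_index_def)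
  moreover have "det P ^ q * det (four_block_mat P B C D) = det P * det (det P \<cdot>\<^sub>m D - C * adj_mat P * B)"
    by (rule det_four_block_mat_adj[OF P carrier(1-3)])
  moreover have "det P \<cdot>\<^sub>m D - C * adj_mat P * B = mat q q (\<lambda>(i, j). schur_compl p M (F i) (G j))"
  proof (rule eq_matI)
    fix i j assume "i < dim_row (mat q q (\<lambda>(i, j). schur_compl p M (F i) (G j)))"
      "j < dim_col (mat q q (\<lambda>(i, j). schur_compl p M (F i) (G j)))"
    then have ij: "i < q" "j < q" by auto
    have adj_dim: "dim_row (adj_mat P) = p" "dim_col (adj_mat P) = p" using carrier(4) by auto
    have X_ij: "(C * adj_mat P * B) $$ (i, j) =
        (\<Sum>c'<p. (\<Sum>c<p. M (F i) c * adj_mat P $$ (c, c')) * M c' (G j))"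
      using ij adj_dim by (simp add: scalar_prod_def C_def B_def lessThan_atLeast0)
    have "(det P \<cdot>\<^sub>m D - C * adj_mat P * B) $$ (i, j) = det P * D $$ (i, j) - (C * adj_mat P * B) $$ (i, j)"
      using ij carrier by (subst index_minus_mat) auto
    also have "\<dots> = det P * M (F i) (G j) - (\<Sum>c<p. \<Sum>c'<p. M (F i) c * adj_mat P $$ (c, c') * M c' (G j))"
      unfolding X_ij sum_distrib_right using ij by (subst sum.swap) (simp add: D_def)
    also have "\<dots> = mat q q (\<lambda>(i, j). schur_compl p M (F i) (G j)) $$ (i, j)"
      using ij by (simp add: schur_compl_def P_def)
    finally show "(det P \<cdot>\<^sub>m D - C * adj_mat P * B) $$ (i, j) =
        mat q q (\<lambda>(i, j). schur_compl p M (F i) (G j)) $$ (i, j)" .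
  qed (use carrier in auto)
  ultimately have "det P * (det P ^ (q - 1) * det (mat (p + q) (p + q) (\<lambda>(a, b). M (pad_index p F a) (pad_index p G b))))
      = det P * det (mat q q (\<lambda>(i, j). schur_compl p M (F i) (G j)))"
    using assms(1) by (cases q) auto
  then show ?thesis using \<delta> by (simp add: P_def)
qed

lemma adj_mat_row_sum:
  fixes M :: "nat \<Rightarrow> nat \<Rightarrow> 'a::comm_ring_1"
  assumes "a < p" "c' < p"
  shows "(\<Sum>c<p. M a c * adj_mat (mat p p (\<lambda>(a, b). M a b)) $$ (c, c')) =
    (if a = c' then det (mat p p (\<lambda>(a, b). M a b)) else 0)"
proof -
  define P where "P = mat p p (\<lambda>(a, b). M a b)"
  have P: "P \<in> carrier_mat p p" unfolding P_def by simp
  have "(P * adj_mat P) $$ (a, c') = (det P \<cdot>\<^sub>m 1\<^sub>m p) $$ (a, c')" using adj_mat(2)[OF P] by simp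
  moreover have "(P * adj_mat P) $$ (a, c') = (\<Sum>c<p. M a c * adj_mat P $$ (c, c'))"
    using assms adj_mat(1)[OF P] by (simp add: scalar_prod_def P_def lessThan_atLeast0)
  ultimately show ?thesis using assms unfolding P_def by simp
qed

lemma adj_mat_col_sum:
  fixes M :: "nat \<Rightarrow> nat \<Rightarrow> 'a::comm_ring_1"
  assumes "c < p" "b < p"
  shows "(\<Sum>c'<p. adj_mat (mat p p (\<lambda>(a, b). M a b)) $$ (c, c') * M c' b) =
    (if c = b then det (mat p p (\<lambda>(a, b). M a b)) else 0)"
proof -
  define P where "P = mat p p (\<lambda>(a, b). M a b)"
  have P: "P \<in> carrier_mat p p" unfolding P_def by simp
  have "(adj_mat P * P) $$ (c, b) = (det P \<cdot>\<^sub>m 1\<^sub>m p) $$ (c, b)" using adj_mat(3)[OF P] by simp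
  moreover have "(adj_mat P * P) $$ (c, b) = (\<Sum>c'<p. adj_mat P $$ (c, c') * M c' b)"
    using assms adj_mat(1)[OF P] by (simp add: scalar_prod_def P_def lessThan_atLeast0)
  ultimately show ?thesis using assms unfolding P_def by simp
qed

lemma schur_compl_eq_0_row:
  fixes M :: "nat \<Rightarrow> nat \<Rightarrow> 'a::comm_ring_1"
  assumes "a < p"
  shows "schur_compl p M a b = 0"
proof -
  have "(\<Sum>c<p. \<Sum>c'<p. M a c * adj_mat (mat p p (\<lambda>(a, b). M a b)) $$ (c, c') * M c' b)
      = (\<Sum>c'<p. (\<Sum>c<p. M a c * adj_mat (mat p p (\<lambda>(a, b). M a b)) $$ (c, c')) * M c' b)"
    unfolding sum_distrib_right by (rule sum.swap)
  also have "\<dots> = (\<Sum>c'<p. if c' = a then det (mat p p (\<lambda>(a, b). M a b)) * M a b else 0)"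
    using assms by (intro sum.cong) (auto simp: adj_mat_row_sum)
  finally show ?thesis using assms unfolding schur_compl_def by simp
qed

lemma schur_compl_eq_0_col:
  fixes M :: "nat \<Rightarrow> nat \<Rightarrow> 'a::comm_ring_1"
  assumes "b < p"
  shows "schur_compl p M a b = 0"
proof -
  have "(\<Sum>c<p. \<Sum>c'<p. M a c * adj_mat (mat p p (\<lambda>(a, b). M a b)) $$ (c, c') * M c' b)
      = (\<Sum>c<p. M a c * (\<Sum>c'<p. adj_mat (mat p p (\<lambda>(a, b). M a b)) $$ (c, c') * M c' b))"
    by (simp add: sum_distrib_left mult.assoc)
  also have "\<dots> = (\<Sum>c<p. if c = b then M a b * det (mat p p (\<lambda>(a, b). M a b)) else 0)"
    using assms by (intro sum.cong) (simp_all add: adj_mat_col_sum)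
  finally show ?thesis using assms unfolding schur_compl_def by (simp add: mult.commute)
qed

section \<open>Components of the jet determinantal variety\<close>

lemma jet_entry_coeff: "coeff (jet_entry k x a b) l = (if l < k then x (a, b, l) else 0)"
  by (simp add: jet_entry_def coeff_sum)

lemma polyfun_poly_jet_entry:
  "a < m \<Longrightarrow> b < n \<Longrightarrow> (\<lambda>x. jet_entry k x a b) \<in> polyfun_poly (jet_vars m n k)"
  unfolding jet_entry_def by (rule polyfun_poly_sum) (auto intro!: polyfun_poly_monom simp: jet_vars_def)

lemma polyfun_jet_minor_coeff:
  assumes "\<And>a. a < s \<Longrightarrow> F a < m" "\<And>b. b < s \<Longrightarrow> G b < n"
  shows "(\<lambda>x. coeff (jet_minor k s F G x) l) \<in> polyfun (jet_vars m n k)"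
  unfolding jet_minor_def
  by (rule polyfun_polyD, rule polyfun_poly_det[of s "\<lambda>x a b. jet_entry k x (F a) (G b)", simplified])
    (use assms in \<open>auto intro: polyfun_poly_jet_entry\<close>)

lemma zariski_closed_jet_det_variety:
  "zariski_closed (jet_vars m n k) (jet_det_variety m n r k :: (nat \<times> nat \<times> nat \<Rightarrow> 'a::comm_ring_1) set)"
proof -
  let ?minor_index = "\<lambda>F s. strict_mono_on {0..<r} F \<and> F ` {0..<r} \<subseteq> {0..<s}"
  define P :: "((nat \<times> nat \<times> nat \<Rightarrow> 'a) \<Rightarrow> 'a) set" where
    "P = {(\<lambda>x. coeff (jet_minor k r F G x) l) | F G l. ?minor_index F m \<and> ?minor_index G n \<and> l < k}"
  have "q \<in> polyfun (jet_vars m n k)" if q: "q \<in> P" for q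
  proof -
    obtain F G l where "F ` {0..<r} \<subseteq> {0..<m}" "G ` {0..<r} \<subseteq> {0..<n}"
      and "q = (\<lambda>x. coeff (jet_minor k r F G x) l)"
      using q unfolding P_def by blast
    then show ?thesis by (auto intro!: polyfun_jet_minor_coeff simp: image_subset_iff)
  qed
  moreover have "(\<forall>q\<in>P. q x = 0) \<longleftrightarrow>
      (\<forall>F G. ?minor_index F m \<and> ?minor_index G n \<longrightarrow> (\<forall>l<k. coeff (jet_minor k r F G x) l = 0))"
    for x :: "nat \<times> nat \<times> nat \<Rightarrow> 'a"
    unfolding P_def by auto
  ultimately show ?thesis
    unfolding zariski_closed_def jet_det_variety_def by (intro exI[of _ P]) auto
qed

lemma monom_dvd_jet_minor:
  assumes "x \<in> jet_det_variety m n r k"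
    and "strict_mono_on {0..<r} F" "F ` {0..<r} \<subseteq> {0..<m}"
    and "strict_mono_on {0..<r} G" "G ` {0..<r} \<subseteq> {0..<n}"
  shows "monom 1 k dvd jet_minor k r F G x"
  using assms unfolding jet_det_variety_def by (auto simp: monom_1_dvd_iff')

text \<open>A parameter point \<open>y\<close> encodes five polynomial matrices of degree \<open>< k\<close>, the \<open>s\<close>-th one
  having entries \<open>\<Sum>\<^sub>l y(s, a, b, l) t\<^sup>l\<close>; they play the roles of \<open>A, B, c, d, E\<close> in
  \<^const>\<open>model_matrix\<close>, with \<open>c\<close> and \<open>d\<close> read off the first column. Indices below \<open>m + n\<close>
  suffice for all five.\<close>
definition param_vars :: "nat \<Rightarrow> nat \<Rightarrow> nat \<Rightarrow> (nat \<times> nat \<times> nat \<times> nat) set" where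
  "param_vars m n k = {0..<5} \<times> {0..<m + n} \<times> {0..<m + n} \<times> {0..<k}"

definition param_entry :: "nat \<Rightarrow> (nat \<times> nat \<times> nat \<times> nat \<Rightarrow> 'a::comm_ring_1) \<Rightarrow> nat \<Rightarrow> nat \<Rightarrow> nat \<Rightarrow> 'a poly"
  where "param_entry k y s a b = (\<Sum>l<k. monom (y (s, a, b, l)) l)"

definition param_matrix :: "nat \<Rightarrow> nat \<Rightarrow> nat \<Rightarrow> (nat \<times> nat \<times> nat \<times> nat \<Rightarrow> 'a::comm_ring_1)
    \<Rightarrow> nat \<Rightarrow> nat \<Rightarrow> 'a poly" where
  "param_matrix p i k y = model_matrix p i k (param_entry k y 0) (param_entry k y 1)
     (\<lambda>a. param_entry k y 2 a 0) (\<lambda>b. param_entry k y 3 b 0) (param_entry k y 4)"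

definition jet_param :: "nat \<Rightarrow> nat \<Rightarrow> nat \<Rightarrow> nat \<Rightarrow> nat
    \<Rightarrow> (nat \<times> nat \<times> nat \<times> nat \<Rightarrow> 'a::comm_ring_1) \<Rightarrow> nat \<times> nat \<times> nat \<Rightarrow> 'a" where
  "jet_param m n p i k y = (\<lambda>(a, b, l).
     if (a, b, l) \<in> jet_vars m n k then coeff (param_matrix p i k y a b) l else 0)"

lemma jet_param_affine: "jet_param m n p i k y \<in> affine_space (jet_vars m n k)"
  unfolding affine_space_def jet_param_def by auto

lemma jet_entry_jet_param:
  assumes "a < m" "b < n"
  shows "jet_entry k (jet_param m n p i k y) a b = poly_cutoff k (param_matrix p i k y a b)"
  by (rule poly_eqI) (use assms in \<open>simp add: jet_entry_coeff coeff_poly_cutoff jet_param_def jet_vars_def\<close>)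

lemma polyfun_jet_param:
  assumes "p < m" "v \<in> jet_vars m n k"
  shows "(\<lambda>y. jet_param m n p i k y v) \<in> polyfun (param_vars m n k)"
proof -
  obtain a b l where v: "v = (a, b, l)" "a < m" "b < n" using assms(2) by (auto simp: jet_vars_def)
  have entry: "(\<lambda>y. param_entry k y s a' b') \<in> polyfun_poly (param_vars m n k)"
    if "s < 5" "a' < m + n" "b' < m + n" for s a' b'
    unfolding param_entry_def using that
    by (intro polyfun_poly_sum polyfun_poly_monom) (auto simp: param_vars_def)
  have "(\<lambda>y. param_matrix p i k y a b) \<in> polyfun_poly (param_vars m n k)"
    unfolding param_matrix_def model_matrix_def using assms(1) v
    by (intro polyfun_poly_add polyfun_poly_mult polyfun_poly_sum polyfun_poly_const entry) auto
  then have "(\<lambda>y. coeff (param_matrix p i k y a b) l) \<in> polyfun (param_vars m n k)"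
    by (rule polyfun_polyD)
  then show ?thesis using assms(2) v by (simp add: jet_param_def)
qed

lemma monom_dvd_jet_minor_jet_param:
  fixes y :: "nat \<times> nat \<times> nat \<times> nat \<Rightarrow> 'a::field"
  assumes "2 * i \<le> k" "1 \<le> q"
    and F: "\<And>a. a < p + q \<Longrightarrow> F a < m" and G: "\<And>b. b < p + q \<Longrightarrow> G b < n"
  shows "monom 1 (i + (q - 1) * (k - i)) dvd jet_minor k (p + q) F G (jet_param m n p i k y)"
proof -
  define Q where "Q a b = (poly_cutoff k (param_matrix p i k y a b) - param_matrix p i k y a b) div monom 1 k"
    for a b
  have cutoff: "poly_cutoff k (param_matrix p i k y a b) = param_matrix p i k y a b + monom 1 k * Q a b"
    for a b
    using cong_poly_cutoff[of k "param_matrix p i k y a b"] by (simp add: Q_def cong_iff_dvd_diff)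
  define E' where "E' a b = param_entry k y 4 a b + monom 1 i * Q a b" for a b
  have entry: "jet_entry k (jet_param m n p i k y) (F a) (G b) =
      model_matrix p i k (param_entry k y 0) (param_entry k y 1) (\<lambda>a. param_entry k y 2 a 0)
        (\<lambda>b. param_entry k y 3 b 0) E' (F a) (G b)"
    if "a < p + q" "b < p + q" for a b
  proof -
    have "jet_entry k (jet_param m n p i k y) (F a) (G b) =
        param_matrix p i k y (F a) (G b) + monom 1 k * Q (F a) (G b)"
      using F[OF that(1)] G[OF that(2)] by (simp add: jet_entry_jet_param cutoff)
    also have "\<dots> = model_matrix p i k (param_entry k y 0) (param_entry k y 1)
        (\<lambda>a. param_entry k y 2 a 0) (\<lambda>b. param_entry k y 3 b 0) E' (F a) (G b)"
      unfolding param_matrix_def E'_def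
      by (rule model_matrix_add_monom[where Q = Q and a = "F a" and b = "G b"]) (use assms(1) in simp)
    finally show ?thesis .
  qed
  have "mat (p + q) (p + q) (\<lambda>(a, b). jet_entry k (jet_param m n p i k y) (F a) (G b)) =
      mat (p + q) (p + q) (\<lambda>(a, b). model_matrix p i k (param_entry k y 0) (param_entry k y 1)
        (\<lambda>a. param_entry k y 2 a 0) (\<lambda>b. param_entry k y 3 b 0) E' (F a) (G b))"
    by (rule eq_matI) (simp_all add: entry)
  then show ?thesis
    unfolding jet_minor_def using monom_dvd_det_model_matrix[OF assms(1,2)] by simp
qed

lemma jet_param_in_variety:
  fixes y :: "nat \<times> nat \<times> nat \<times> nat \<Rightarrow> 'a::field"
  assumes "2 * i \<le> k"
  shows "jet_param m n p i k y \<in> jet_det_variety m n (p + 2) k"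
  unfolding jet_det_variety_def
proof (intro CollectI conjI allI impI jet_param_affine)
  fix F G l
  assume FG: "strict_mono_on {0..<p + 2} F \<and> F ` {0..<p + 2} \<subseteq> {0..<m} \<and>
    strict_mono_on {0..<p + 2} G \<and> G ` {0..<p + 2} \<subseteq> {0..<n}" and "l < k"
  have "monom 1 (i + (2 - 1) * (k - i)) dvd jet_minor k (p + 2) F G (jet_param m n p i k y)"
    by (rule monom_dvd_jet_minor_jet_param[OF assms]) (use FG in \<open>auto simp: image_subset_iff\<close>)
  then show "coeff (jet_minor k (p + 2) F G (jet_param m n p i k y)) l = 0"
    using assms \<open>l < k\<close> by (simp add: monom_1_dvd_iff')
qed

text \<open>On the image of \<^const>\<open>jet_param\<close> for \<open>i\<close>, the leading \<open>p\<close>-minor is a unit, the leading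
  \<open>(p + 1)\<close>-minor has order \<open>i\<close> and, if \<open>i > 0\<close>, the leading \<open>(p + 3)\<close>-minor has order
  \<open>2 k - i\<close>; the last two orders tell the parametrisations apart.\<close>
definition jet_separator :: "nat \<Rightarrow> nat \<Rightarrow> nat \<Rightarrow> (nat \<times> nat \<times> nat \<Rightarrow> 'a::comm_ring_1) \<Rightarrow> 'a" where
  "jet_separator p i k x = coeff (jet_minor k p id id x) 0 * coeff (jet_minor k (p + 1) id id x) i *
     (if i = 0 then 1 else coeff (jet_minor k (p + 3) id id x) (2 * k - i))"

lemma polyfun_jet_separator:
  assumes "p + 3 \<le> m" "m \<le> n"
  shows "jet_separator p i k \<in> polyfun (jet_vars m n k)"
proof -
  have minor: "(\<lambda>x. coeff (jet_minor k s id id x) l) \<in> polyfun (jet_vars m n k)" if "s \<le> p + 3" for s l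
    using that assms by (intro polyfun_jet_minor_coeff) auto
  show ?thesis
    unfolding jet_separator_def[abs_def]
    by (cases "i = 0") (auto intro!: polyfun.pf_mult polyfun.pf_const minor)
qed

lemma jet_separator_jet_param_eq_0:
  fixes y :: "nat \<times> nat \<times> nat \<times> nat \<Rightarrow> 'a::field"
  assumes "p + 3 \<le> m" "m \<le> n" "i \<noteq> j" "2 * i \<le> k" "2 * j \<le> k"
  shows "jet_separator p i k (jet_param m n p j k y) = 0"
proof (cases "i < j")
  case True
  have "monom 1 (j + (1 - 1) * (k - j)) dvd jet_minor k (p + 1) id id (jet_param m n p j k y)"
    by (rule monom_dvd_jet_minor_jet_param) (use assms in auto)
  then show ?thesis using True by (simp add: jet_separator_def monom_1_dvd_iff')
next
  case False
  have "monom 1 (j + (3 - 1) * (k - j)) dvd jet_minor k (p + 3) id id (jet_param m n p j k y)"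
    by (rule monom_dvd_jet_minor_jet_param) (use assms in auto)
  moreover have "2 * k - i < j + (3 - 1) * (k - j)" "i \<noteq> 0" using False assms by auto
  ultimately show ?thesis by (simp add: jet_separator_def monom_1_dvd_iff')
qed

text \<open>The parameters of the diagonal matrix \<open>diag(1, \<dots>, 1, t\<^sup>i, t\<^sup>k\<^sup>-\<^sup>i, t\<^sup>k\<^sup>-\<^sup>i, 0, \<dots>)\<close> with
  \<open>p\<close> leading ones.\<close>
definition jet_param_base :: "nat \<Rightarrow> nat \<times> nat \<times> nat \<times> nat \<Rightarrow> 'a::comm_ring_1" where
  "jet_param_base p = (\<lambda>(s, a, b, l). if l = 0 \<and> ((s = 0 \<or> s = 1) \<and> a = b \<and> a < p \<or>
     (s = 2 \<or> s = 3) \<and> a = p \<and> b = 0 \<or> s = 4 \<and> a = b \<and> (a = p + 1 \<or> a = p + 2)) then 1 else 0)"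

lemma param_entry_base:
  assumes "1 \<le> k"
  shows "param_entry k (jet_param_base p) s a b = (if (s = 0 \<or> s = 1) \<and> a = b \<and> a < p \<or>
     (s = 2 \<or> s = 3) \<and> a = p \<and> b = 0 \<or> s = 4 \<and> a = b \<and> (a = p + 1 \<or> a = p + 2) then 1 else 0)"
  by (rule poly_eqI) (use assms in \<open>auto simp: param_entry_def jet_param_base_def coeff_sum coeff_monom\<close>)

lemma jet_minor_jet_param_base:
  assumes "1 \<le> k" "s \<le> m" "m \<le> n"
  shows "jet_minor k s id id (jet_param m n p i k (jet_param_base p)) = (\<Prod>a<s.
    poly_cutoff k (if a < p then 1 else if a = p then monom 1 i
      else if a = p + 1 \<or> a = p + 2 then monom 1 (k - i) else 0))"
proof -
  define diag :: "nat \<Rightarrow> 'a poly" where "diag a = (if a < p then 1 else if a = p then monom 1 i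
      else if a = p + 1 \<or> a = p + 2 then monom 1 (k - i) else 0)" for a
  have sum_diag: "(\<Sum>l<p. param_entry k (jet_param_base p) 0 a l * param_entry k (jet_param_base p) 1 l b) =
      (if a = b \<and> a < p then 1 else 0 :: 'a poly)" for a b
    unfolding param_entry_base[OF assms(1)]
    by (rule trans[OF sum.cong[OF refl, of _ _ "\<lambda>l. if l = a then (if a = b \<and> a < p then 1 else 0) else 0"]])
      auto
  have "param_matrix p i k (jet_param_base p) a b = (if a = b then diag a else 0)" for a b
    unfolding param_matrix_def model_matrix_def sum_diag by (auto simp: param_entry_base[OF assms(1)] diag_def)
  then have "jet_entry k (jet_param m n p i k (jet_param_base p)) a b =
      (if a = b then poly_cutoff k (diag a) else 0)" if "a < m" "b < n" for a b
    using that by (simp add: jet_entry_jet_param)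
  then show ?thesis
    unfolding jet_minor_def det_mat_diagonal[symmetric] diag_def[symmetric] using assms(2,3)
    by (intro arg_cong[where f = det] eq_matI) auto
qed

lemma jet_separator_base_ne_0:
  assumes "1 \<le> k" "2 * i \<le> k" "p + 3 \<le> m" "m \<le> n"
  shows "jet_separator p i k (jet_param m n p i k (jet_param_base p) :: _ \<Rightarrow> 'a::field) \<noteq> 0"
proof -
  let ?x = "jet_param m n p i k (jet_param_base p) :: _ \<Rightarrow> 'a"
  have ik: "i < k" using assms(1,2) by simp
  have cutoff_monom: "poly_cutoff k (monom 1 j :: 'a poly) = monom 1 j" if "j < k" for j
    by (rule poly_eqI) (use that in \<open>simp add: coeff_poly_cutoff coeff_monom\<close>)
  have prod_p: "(\<Prod>a<p. poly_cutoff k (if a < p then 1 else if a = p then monom 1 i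
      else if a = p + 1 \<or> a = p + 2 then monom 1 (k - i) else 0)) = (1 :: 'a poly)"
    using assms(1) by (intro prod.neutral) auto
  have "jet_minor k p id id ?x = 1" "jet_minor k (p + 1) id id ?x = monom 1 i"
    using assms ik by (simp_all add: jet_minor_jet_param_base prod_p cutoff_monom)
  moreover have "jet_minor k (p + 3) id id ?x = monom 1 (2 * k - i)" if "i \<noteq> 0"
  proof -
    have "jet_minor k (p + 3) id id ?x = monom 1 i * monom 1 (k - i) * monom 1 (k - i)"
      using assms ik that
      by (simp add: jet_minor_jet_param_base numeral_3_eq_3 prod_p cutoff_monom mult.assoc)
    also have "\<dots> = monom 1 (2 * k - i)" using ik by (simp add: mult_monom mult_2)
    finally show ?thesis .
  qed
  ultimately show ?thesis by (simp add: jet_separator_def)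
qed

lemma range_jet_paramI:
  fixes x :: "nat \<times> nat \<times> nat \<Rightarrow> 'a::field"
  assumes "x \<in> affine_space (jet_vars m n k)"
    and x_cong: "\<And>a b. a < m \<Longrightarrow> b < n \<Longrightarrow>
      [jet_entry k x a b = model_matrix p i k A B c d E a b] (mod monom 1 k)"
  shows "x \<in> range (jet_param m n p i k)"
proof -
  define y :: "nat \<times> nat \<times> nat \<times> nat \<Rightarrow> 'a" where
    "y = (\<lambda>(s, a, b, l). coeff (if s = 0 then A a b else if s = 1 then B a b
       else if s = 2 then c a else if s = 3 then d a else E a b) l)"
  have entry: "param_entry k y s a b = poly_cutoff k (if s = 0 then A a b else if s = 1 then B a b
       else if s = 2 then c a else if s = 3 then d a else E a b)" for s a b
    by (rule poly_eqI) (simp add: param_entry_def y_def coeff_sum coeff_monom coeff_poly_cutoff)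
  have y_cong: "[param_matrix p i k y a b = model_matrix p i k A B c d E a b] (mod monom 1 k)" for a b
    unfolding param_matrix_def model_matrix_def entry
    by (intro cong_add cong_mult cong_sum cong_refl) (simp_all add: cong_poly_cutoff)
  have "x v = jet_param m n p i k y v" for v
  proof (cases "v \<in> jet_vars m n k")
    case True
    then obtain a b l where v: "v = (a, b, l)" "a < m" "b < n" "l < k" by (auto simp: jet_vars_def)
    have "x v = coeff (jet_entry k x a b) l" by (simp add: jet_entry_coeff v)
    also have "\<dots> = coeff (param_matrix p i k y a b) l"
      using cong_trans[OF x_cong[OF v(2,3)] cong_sym[OF y_cong]] v(4) by (rule cong_monom_coeff)
    finally show ?thesis using True v by (simp add: jet_param_def)
  next
    case False
    then show ?thesis using assms(1) by (cases v) (auto simp: jet_param_def affine_space_def)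
  qed
  then show ?thesis by blast
qed

context
  fixes m n p i k :: nat and x :: "nat \<times> nat \<times> nat \<Rightarrow> 'a::field"
  assumes x: "x \<in> jet_det_variety m n (p + 2) k"
    and dims: "p + 3 \<le> m" "m \<le> n" and ik: "2 * i \<le> k"
    and sep: "jet_separator p i k x \<noteq> 0"
begin

lemma leading_minor_unit: "coeff (det (mat p p (\<lambda>(a, b). jet_entry k x a b))) 0 \<noteq> 0"
  using sep by (auto simp: jet_separator_def jet_minor_def)

lemma leading_minor_ne_0: "det (mat p p (\<lambda>(a, b). jet_entry k x a b)) \<noteq> 0"
  using leading_minor_unit by auto

lemma schur_compl_corner: "schur_compl p (jet_entry k x) p p = jet_minor k (p + 1) id id x"
proof -
  have "det (mat (p + 1) (p + 1) (\<lambda>(a, b). jet_entry k x (pad_index p (\<lambda>_. p) a) (pad_index p (\<lambda>_. p) b)))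
      = det (mat 1 1 (\<lambda>(a, b). schur_compl p (jet_entry k x) p p))"
    using det_schur_compl[of 1 p "jet_entry k x" "\<lambda>_. p" "\<lambda>_. p"] leading_minor_ne_0 by simp
  moreover have "mat (p + 1) (p + 1) (\<lambda>(a, b). jet_entry k x (pad_index p (\<lambda>_. p) a) (pad_index p (\<lambda>_. p) b))
      = mat (p + 1) (p + 1) (\<lambda>(a, b). jet_entry k x (id a) (id b))"
    by (rule eq_matI) (auto simp: pad_index_def less_Suc_eq)
  ultimately show ?thesis by (simp add: jet_minor_def det_single)
qed

lemma det_schur_compl_3:
  "det (mat p p (\<lambda>(a, b). jet_entry k x a b)) ^ 2 * jet_minor k (p + 3) id id x =
    det (mat 3 3 (\<lambda>(a, b). schur_compl p (jet_entry k x) (p + a) (p + b)))"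
proof -
  have "pad_index p (\<lambda>a. p + a) = id" by (auto simp: pad_index_def)
  then show ?thesis
    using det_schur_compl[of 3 p "jet_entry k x" "\<lambda>a. p + a" "\<lambda>b. p + b"] leading_minor_ne_0
    by (simp add: jet_minor_def)
qed

lemma schur_compl_minor_2_dvd_ordered:
  assumes "p \<le> a" "a < a'" "a' < m" "p \<le> b" "b < b'" "b' < n"
  shows "monom 1 k dvd schur_compl p (jet_entry k x) a b * schur_compl p (jet_entry k x) a' b' -
    schur_compl p (jet_entry k x) a b' * schur_compl p (jet_entry k x) a' b"
proof -
  define F where "F j = (if j = 0 then a else a')" for j :: nat
  define G where "G j = (if j = 0 then b else b')" for j :: nat
  have "det (mat p p (\<lambda>(a, b). jet_entry k x a b)) * jet_minor k (p + 2) (pad_index p F) (pad_index p G) x =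
      det (mat 2 2 (\<lambda>(i, j). schur_compl p (jet_entry k x) (F i) (G j)))"
    using det_schur_compl[of 2 p "jet_entry k x" F G] leading_minor_ne_0 by (simp add: jet_minor_def)
  also have "\<dots> = schur_compl p (jet_entry k x) a b * schur_compl p (jet_entry k x) a' b' -
      schur_compl p (jet_entry k x) a b' * schur_compl p (jet_entry k x) a' b"
    by (simp add: det_mat_2 F_def G_def)
  finally have minor_eq: "\<dots> = det (mat p p (\<lambda>(a, b). jet_entry k x a b)) *
      jet_minor k (p + 2) (pad_index p F) (pad_index p G) x" ..
  have "monom 1 k dvd jet_minor k (p + 2) (pad_index p F) (pad_index p G) x"
  proof (rule monom_dvd_jet_minor[OF x])
    show "strict_mono_on {0..<p + 2} (pad_index p F)"
      by (rule strict_mono_on_pad_index) (use assms in \<open>simp_all add: F_def\<close>)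
    show "strict_mono_on {0..<p + 2} (pad_index p G)"
      by (rule strict_mono_on_pad_index) (use assms in \<open>simp_all add: G_def\<close>)
    show "pad_index p F ` {0..<p + 2} \<subseteq> {0..<m}" "pad_index p G ` {0..<p + 2} \<subseteq> {0..<n}"
      using assms dims by (auto simp: pad_index_def F_def G_def)
  qed
  then show ?thesis unfolding minor_eq by simp
qed

lemma schur_compl_minor_2_dvd:
  assumes "a \<in> {p..<m}" "a' \<in> {p..<m}" "b \<in> {p..<n}" "b' \<in> {p..<n}"
  shows "monom 1 k dvd schur_compl p (jet_entry k x) a b * schur_compl p (jet_entry k x) a' b' -
    schur_compl p (jet_entry k x) a b' * schur_compl p (jet_entry k x) a' b"
proof -
  let ?Y = "schur_compl p (jet_entry k x)"
  have swap: "?Y a b * ?Y a' b' - ?Y a b' * ?Y a' b = - (?Y a b' * ?Y a' b - ?Y a b * ?Y a' b')"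
    "?Y a b * ?Y a' b' - ?Y a b' * ?Y a' b = - (?Y a' b * ?Y a b' - ?Y a' b' * ?Y a b)"
    "?Y a b * ?Y a' b' - ?Y a b' * ?Y a' b = ?Y a' b' * ?Y a b - ?Y a' b * ?Y a b'"
    by (simp_all add: algebra_simps)
  consider "a = a' \<or> b = b'" | "a < a'" "b < b'" | "a < a'" "b' < b" | "a' < a" "b < b'" | "a' < a" "b' < b"
    by linarith
  then show ?thesis
  proof cases
    case 1
    then show ?thesis by (auto simp: mult.commute)
  next
    case 2
    then show ?thesis using assms schur_compl_minor_2_dvd_ordered by simp
  next
    case 3
    then show ?thesis using assms schur_compl_minor_2_dvd_ordered[of a a' b' b]
      by (simp only: swap(1) dvd_minus_iff) simp
  next
    case 4
    then show ?thesis using assms schur_compl_minor_2_dvd_ordered[of a' a b b']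
      by (simp only: swap(2) dvd_minus_iff) simp
  next
    case 5
    then show ?thesis using assms schur_compl_minor_2_dvd_ordered[of a' a b' b]
      by (simp only: swap(3)) simp
  qed
qed

text \<open>If some entry had order \<open>e < i\<close>, the rank-one form at order \<open>e\<close> would make the leading
  \<open>(p + 3)\<close>-minor divisible by \<open>t\<^sup>2\<^sup>k\<^sup>-\<^sup>e\<close>, contradicting its order \<open>2 k - i\<close>.\<close>
lemma monom_dvd_schur_compl:
  assumes "a \<in> {p..<m}" "b \<in> {p..<n}"
  shows "monom 1 i dvd schur_compl p (jet_entry k x) a b"
proof (rule ccontr)
  let ?Y = "schur_compl p (jet_entry k x)"
  let ?nonzero = "\<lambda>l. \<exists>a\<in>{p..<m}. \<exists>b\<in>{p..<n}. coeff (?Y a b) l \<noteq> 0"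
  assume "\<not> ?thesis"
  then obtain l where "l < i" "coeff (?Y a b) l \<noteq> 0" by (auto simp: monom_1_dvd_iff')
  then have l: "l < i" "?nonzero l" using assms by blast+
  define e where "e = (LEAST l. ?nonzero l)"
  have "?nonzero e" "e \<le> l" unfolding e_def using l(2) by (rule LeastI, rule Least_le)
  then obtain u v where uv: "u \<in> {p..<m}" "v \<in> {p..<n}" "coeff (?Y u v) e \<noteq> 0" by blast
  have ei: "e < i" using \<open>e \<le> l\<close> l(1) by simp
  have e_dvd: "monom 1 e dvd ?Y a b" if "a \<in> {p..<m}" "b \<in> {p..<n}" for a b
    using not_less_Least[of _ ?nonzero] that by (auto simp: monom_1_dvd_iff' e_def)
  then obtain c d E where cdE: "\<forall>a\<in>{p..<m}. \<forall>b\<in>{p..<n}.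
      ?Y a b = monom 1 e * c a * d b + monom 1 (k - e) * E a b"
    using rank_one_mod_monom[of "{p..<m}" "{p..<n}" e ?Y u v k, OF e_dvd uv schur_compl_minor_2_dvd] ei ik
    by force
  have "mat 3 3 (\<lambda>(a, b). ?Y (p + a) (p + b)) =
      mat (0 + 3) (0 + 3) (\<lambda>(a, b). model_matrix 0 e k (\<lambda>_ _. 0) (\<lambda>_ _. 0) c d E (p + a) (p + b))"
    using cdE dims by (intro eq_matI) (auto simp: model_matrix_def)
  then have "monom 1 (e + (3 - 1) * (k - e)) dvd det (mat 3 3 (\<lambda>(a, b). ?Y (p + a) (p + b)))"
    using monom_dvd_det_model_matrix[of e k 3 0 "\<lambda>_ _. 0" "\<lambda>_ _. 0" c d E "\<lambda>a. p + a" "\<lambda>b. p + b"]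
      ei ik by simp
  moreover have "e + (3 - 1) * (k - e) = 2 * k - e" using ei ik by simp
  ultimately have "monom 1 (2 * k - e) dvd
      det (mat p p (\<lambda>(a, b). jet_entry k x a b)) ^ 2 * jet_minor k (p + 3) id id x"
    by (simp add: det_schur_compl_3)
  then have "monom 1 (2 * k - e) dvd jet_minor k (p + 3) id id x"
    by (rule monom_dvd_mult_cancel_unit[rotated]) (simp add: coeff_0_power leading_minor_unit)
  then have "coeff (jet_minor k (p + 3) id id x) (2 * k - i) = 0"
    using ei ik by (simp add: monom_1_dvd_iff')
  then show False using sep ei by (simp add: jet_separator_def)
qed

lemma schur_compl_rank_one:
  "\<exists>c d E. \<forall>a\<in>{p..<m}. \<forall>b\<in>{p..<n}.
     schur_compl p (jet_entry k x) a b = monom 1 i * c a * d b + monom 1 (k - i) * E a b"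
proof (rule rank_one_mod_monom)
  show "p \<in> {p..<m}" "p \<in> {p..<n}" using dims by auto
  show "coeff (schur_compl p (jet_entry k x) p p) i \<noteq> 0"
    using sep by (simp add: schur_compl_corner jet_separator_def)
qed (use monom_dvd_schur_compl schur_compl_minor_2_dvd ik in auto)

text \<open>Modulo \<open>t\<^sup>k\<close> the leading minor \<open>\<delta>\<close> is invertible, and \<open>\<delta> M\<close> splits as
  \<open>M\<^sub>\<bullet>\<^sub>p adj(M\<^sub>p\<^sub>p) M\<^sub>p\<^sub>\<bullet>\<close> plus the Schur complement, which is of rank one up to \<open>t\<^sup>k\<^sup>-\<^sup>i\<close>.\<close>
lemma in_range_jet_param: "x \<in> range (jet_param m n p i k)"
proof -
  let ?M = "jet_entry k x" and ?Y = "schur_compl p (jet_entry k x)"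
  let ?\<delta> = "det (mat p p (\<lambda>(a, b). jet_entry k x a b))"
  let ?adj = "adj_mat (mat p p (\<lambda>(a, b). jet_entry k x a b))"
  obtain c d E where cdE: "\<forall>a\<in>{p..<m}. \<forall>b\<in>{p..<n}. ?Y a b = monom 1 i * c a * d b + monom 1 (k - i) * E a b"
    using schur_compl_rank_one by blast
  define c' where "c' a = (if p \<le> a then c a else 0)" for a
  define d' where "d' b = (if p \<le> b then d b else 0)" for b
  define E' where "E' a b = (if p \<le> a \<and> p \<le> b then E a b else 0)" for a b
  have Y: "?Y a b = monom 1 i * c' a * d' b + monom 1 (k - i) * E' a b" if "a < m" "b < n" for a b
    using cdE that schur_compl_eq_0_row[of a p] schur_compl_eq_0_col[of b p]
    by (cases "a < p \<or> b < p") (auto simp: c'_def d'_def E'_def)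
  obtain \<mu> where \<mu>: "[\<mu> * ?\<delta> = 1] (mod monom 1 k)" using inverse_mod_monom[OF leading_minor_unit] by blast
  define B where "B l b = \<mu> * (\<Sum>l'<p. ?adj $$ (l, l') * ?M l' b)" for l b
  have "[?M a b = model_matrix p i k ?M B (\<lambda>a. \<mu> * c' a) d' (\<lambda>a b. \<mu> * E' a b) a b] (mod monom 1 k)"
    if "a < m" "b < n" for a b
  proof -
    have "model_matrix p i k ?M B (\<lambda>a. \<mu> * c' a) d' (\<lambda>a b. \<mu> * E' a b) a b =
        \<mu> * ((\<Sum>l<p. \<Sum>l'<p. ?M a l * ?adj $$ (l, l') * ?M l' b) + ?Y a b)"
      by (simp add: model_matrix_def B_def Y[OF that] sum_distrib_left algebra_simps)
    also have "\<dots> = \<mu> * ?\<delta> * ?M a b" by (simp add: schur_compl_def)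
    finally show ?thesis using cong_scalar_right[OF \<mu>, of "?M a b"] by (simp add: cong_sym)
  qed
  moreover have "x \<in> affine_space (jet_vars m n k)" using x by (simp add: jet_det_variety_def)
  ultimately show ?thesis by (intro range_jet_paramI) auto
qed

end

lemma irreducible_component_jet_param:
  assumes "infinite (UNIV :: 'a::field set)" "p + 3 \<le> m" "m \<le> n" "2 * i \<le> k" "1 \<le> k"
  shows "zariski_closure (jet_vars m n k) (range (jet_param m n p i k :: _ \<Rightarrow> _ \<Rightarrow> 'a))
    \<in> irreducible_components (jet_vars m n k) (jet_det_variety m n (p + 2) k)"
proof -
  let ?V = "jet_vars m n k" and ?\<phi> = "jet_param m n p i k :: _ \<Rightarrow> _ \<Rightarrow> 'a"
  have "finite (param_vars m n k)" by (simp add: param_vars_def)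
  then have irreducible: "zariski_irreducible ?V (zariski_closure ?V (range ?\<phi>))"
    using assms(2) by (intro zariski_irreducible_closure_image[OF assms(1)])
      (auto intro: jet_param_affine polyfun_jet_param)
  have closure_sub: "zariski_closure ?V (range ?\<phi>) \<subseteq> jet_det_variety m n (p + 2) k"
    by (intro zariski_closure_minimal zariski_closed_jet_det_variety)
      (use jet_param_in_variety[OF assms(4)] in blast)
  have range_sub: "range ?\<phi> \<subseteq> zariski_closure ?V (range ?\<phi>)"
    by (rule zariski_closure_superset) (auto intro: jet_param_affine)
  have "jet_separator p i k (?\<phi> (jet_param_base p)) \<noteq> 0"
    using assms(2-5) by (intro jet_separator_base_ne_0)
  from irreducible closure_sub polyfun_jet_separator[OF assms(2,3)] _ this show ?thesis
  proof (rule irreducible_componentI)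
    show "?\<phi> (jet_param_base p) \<in> zariski_closure ?V (range ?\<phi>)" using range_sub by blast
    show "x \<in> zariski_closure ?V (range ?\<phi>)"
      if "x \<in> jet_det_variety m n (p + 2) k" "jet_separator p i k x \<noteq> 0" for x
      using in_range_jet_param[OF that(1) assms(2,3,4) that(2)] range_sub by blast
  qed
qed

lemma inj_on_zariski_closure_jet_param:
  assumes "1 \<le> k" "p + 3 \<le> m" "m \<le> n"
  shows "inj_on (\<lambda>i. zariski_closure (jet_vars m n k) (range (jet_param m n p i k :: _ \<Rightarrow> _ \<Rightarrow> 'a::field)))
    {0..k div 2}"
proof (rule inj_onI, rule ccontr)
  fix i j assume "i \<in> {0..k div 2}" "j \<in> {0..k div 2}" and "i \<noteq> j"
  then have ij: "2 * i \<le> k" "2 * j \<le> k" "i \<noteq> j" by auto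
  let ?base = "jet_param m n p i k (jet_param_base p) :: _ \<Rightarrow> 'a"
  assume closure_eq: "zariski_closure (jet_vars m n k) (range (jet_param m n p i k)) =
    zariski_closure (jet_vars m n k) (range (jet_param m n p j k :: _ \<Rightarrow> _ \<Rightarrow> 'a))"
  have "?base \<in> zariski_closure (jet_vars m n k) (range (jet_param m n p i k))"
    by (rule subsetD[OF zariski_closure_superset]) (auto intro: jet_param_affine)
  then have "?base \<in> zariski_closure (jet_vars m n k) (range (jet_param m n p j k))"
    by (simp add: closure_eq)
  then have "jet_separator p i k ?base = 0"
  proof (rule zariski_closure_vanishing[OF _ polyfun_jet_separator[OF assms(2,3)]])
    show "jet_separator p i k s = 0" if "s \<in> range (jet_param m n p j k)" for s :: "_ \<Rightarrow> 'a"
      using that ij assms(2,3) by (auto intro: jet_separator_jet_param_eq_0)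
  qed
  moreover have "jet_separator p i k ?base \<noteq> 0"
    using ij assms by (intro jet_separator_base_ne_0)
  ultimately show False by contradiction
qed

theorem theorem6p1:
  fixes m n r k :: nat
  assumes "alg_closed TYPE('a::field)"
    and "2 \<le> r" and "r < m" and "m \<le> n" and "1 \<le> k"
  shows "\<exists>Cs \<subseteq> irreducible_components (jet_vars m n k)
                  (jet_det_variety m n r k :: (nat \<times> nat \<times> nat \<Rightarrow> 'a) set).
           finite Cs \<and> 1 + k div 2 \<le> card Cs"
proof -
  define p where "p = r - 2"
  have r: "r = p + 2" and dims: "p + 3 \<le> m" "m \<le> n" using assms unfolding p_def by auto
  define C where "C i = zariski_closure (jet_vars m n k) (range (jet_param m n p i k :: _ \<Rightarrow> _ \<Rightarrow> 'a))" for i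
  have "C ` {0..k div 2} \<subseteq> irreducible_components (jet_vars m n k) (jet_det_variety m n r k)"
    using irreducible_component_jet_param[OF alg_closed_infinite[OF assms(1)] dims] assms(5)
    by (auto simp: C_def r)
  moreover have "card (C ` {0..k div 2}) = 1 + k div 2"
    using card_image[OF inj_on_zariski_closure_jet_param[OF assms(5) dims]] by (simp add: C_def)
  ultimately show ?thesis by (intro exI[of _ "C ` {0..k div 2}"]) auto
qed

end
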